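(* Let $M$ be a countably based semigroup in the category $\mathrm{Cu}$ which is an interpolation semigroup, and let $X$ be a finite dimensional compact metric space. Then $\mathrm{Lsc}(X,M)$ is an interpolation semigroup.
   Context: In a partially ordered abelian semigroup $M$, $a\ll b$ (compact containment) means: for every increasing sequence $(b_n)$ whose supremum exists and satisfies $b\le\sup b_n$, there is $n$ with $a\le b_n$. The category $\mathrm{Cu}$ consists of partially ordered abelian semigroups $M$ in which every increasing sequence has a supremum, every element is the supremum of a sequence $(a_n)$ with $a_n\ll a_{n+1}$, and $\ll$ and suprema of increasing sequences are compatible with addition. $M$ is countably based if there is a countable subset $B\subseteq M$ such that whenever $a'\ll a$ in $M$ there is $b\in B$ with $a'\le b\ll a$. $M$ is an interpolation semigroup if whenever $a_i\le b_j$ ($i,j=1,2$) there is $c\in M$ with $a_i\le c\le b_j$ for all $i,j$. $\mathrm{Lsc}(X,M)$ is the set of maps $f\colon X\to M$ such that $\{t\in X: a\ll f(t)\}$ is open for every $a\in M$, with pointwise addition and order. Dimension is covering dimension. *)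

theory Defs
  imports "HOL-Analysis.Analysis"
begin

definition is_sup_seq :: "(nat \<Rightarrow> 'a::order) \<Rightarrow> 'a \<Rightarrow> bool" where
  "is_sup_seq s x \<longleftrightarrow> (\<forall>n. s n \<le> x) \<and> (\<forall>y. (\<forall>n. s n \<le> y) \<longrightarrow> x \<le> y)"

text \<open>Compact containment a << b.\<close>
definition cc :: "'a::order \<Rightarrow> 'a \<Rightarrow> bool" where
  "cc a b \<longleftrightarrow> (\<forall>s x. incseq s \<and> is_sup_seq s x \<and> b \<le> x \<longrightarrow> (\<exists>n. a \<le> s n))"

definition Cu_semigroup :: "'a::{ab_semigroup_add, order} itself \<Rightarrow> bool" where
  "Cu_semigroup _ \<longleftrightarrow>
     (\<forall>a b c::'a. a \<le> b \<longrightarrow> a + c \<le> b + c) \<and>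
     (\<forall>s::nat \<Rightarrow> 'a. incseq s \<longrightarrow> (\<exists>x. is_sup_seq s x)) \<and>
     (\<forall>a::'a. \<exists>s. (\<forall>n. cc (s n) (s (Suc n))) \<and> is_sup_seq s a) \<and>
     (\<forall>a b c d::'a. cc a b \<and> cc c d \<longrightarrow> cc (a + c) (b + d)) \<and>
     (\<forall>s t::nat \<Rightarrow> 'a. \<forall>x y. incseq s \<and> incseq t \<and> is_sup_seq s x \<and> is_sup_seq t y
        \<longrightarrow> is_sup_seq (\<lambda>n. s n + t n) (x + y))"

definition countably_based :: "'a::order itself \<Rightarrow> bool" where
  "countably_based _ \<longleftrightarrow> (\<exists>B::'a set. countable B \<and>
     (\<forall>a' a. cc a' a \<longrightarrow> (\<exists>b\<in>B. a' \<le> b \<and> cc b a)))"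

definition interpolation_semigroup :: "'a::order itself \<Rightarrow> bool" where
  "interpolation_semigroup _ \<longleftrightarrow> (\<forall>a1 a2 b1 b2::'a.
     a1 \<le> b1 \<and> a1 \<le> b2 \<and> a2 \<le> b1 \<and> a2 \<le> b2 \<longrightarrow>
     (\<exists>c. a1 \<le> c \<and> a2 \<le> c \<and> c \<le> b1 \<and> c \<le> b2))"

text \<open>Lsc(X,M): maps X -> M (values outside X irrelevant) such that
  {t \<in> X. a << f t} is open in X for every a.\<close>
definition Lsc :: "'b::metric_space set \<Rightarrow> ('b \<Rightarrow> 'a::order) set" where
  "Lsc X = {f. \<forall>a. openin (top_of_set X) {t\<in>X. cc a (f t)}}"

definition Lsc_interpolation :: "'b::metric_space set \<Rightarrow> 'a::order itself \<Rightarrow> bool" where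
  "Lsc_interpolation X _ \<longleftrightarrow> (\<forall>f1 f2 g1 g2 :: 'b \<Rightarrow> 'a.
     f1 \<in> Lsc X \<and> f2 \<in> Lsc X \<and> g1 \<in> Lsc X \<and> g2 \<in> Lsc X \<and>
     (\<forall>t\<in>X. f1 t \<le> g1 t \<and> f1 t \<le> g2 t \<and> f2 t \<le> g1 t \<and> f2 t \<le> g2 t) \<longrightarrow>
     (\<exists>h\<in>Lsc X. \<forall>t\<in>X. f1 t \<le> h t \<and> f2 t \<le> h t \<and> h t \<le> g1 t \<and> h t \<le> g2 t))"

definition covering_dim_le :: "'b::topological_space set \<Rightarrow> nat \<Rightarrow> bool" where
  "covering_dim_le X n \<longleftrightarrow> (\<forall>\<U>. finite \<U> \<and> (\<forall>U\<in>\<U>. openin (top_of_set X) U) \<and> X \<subseteq> \<Union>\<U> \<longrightarrow>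
     (\<exists>\<V>. finite \<V> \<and> (\<forall>V\<in>\<V>. openin (top_of_set X) V) \<and> X \<subseteq> \<Union>\<V> \<and>
        (\<forall>V\<in>\<V>. \<exists>U\<in>\<U>. V \<subseteq> U) \<and> (\<forall>x\<in>X. card {V\<in>\<V>. x \<in> V} \<le> n + 1)))"

definition finite_dimensional :: "'b::topological_space set \<Rightarrow> bool" where
  "finite_dimensional X \<longleftrightarrow> (\<exists>n. covering_dim_le X n)"

end

theory Submission
  imports Defs
begin

text \<open>The interpolant is the pointwise "meet" of g1 and g2: at each t, the supremum of
  the basis elements way below both g1 t and g2 t. This set is directed, by interpolation
  in M, and countable, so it has a supremum h t along an increasing sequence. Then
  a << h t holds iff a << e << g1 t, g2 t for some e, an open condition in t because
  g1 and g2 are lower semicontinuous. Lying above f1 and f2 only uses that every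
  element is a supremum of basis elements.\<close>

lemma cc_le: "cc a b \<Longrightarrow> a \<le> (b::'a::order)"
  unfolding cc_def
  by (erule allE[of _ "\<lambda>_. b"], erule allE[of _ b]) (auto simp: is_sup_seq_def incseq_def)

lemma cc_mono_right: "cc a b \<Longrightarrow> b \<le> c \<Longrightarrow> cc a (c::'a::order)"
  unfolding cc_def by (meson order_trans)

lemma cc_mono_left: "a \<le> a' \<Longrightarrow> cc a' b \<Longrightarrow> cc a (b::'a::order)"
  unfolding cc_def by (meson order_trans)

lemma is_sup_seq_upper: "is_sup_seq s x \<Longrightarrow> s n \<le> x"
  unfolding is_sup_seq_def by blast

lemma is_sup_seq_least: "is_sup_seq s x \<Longrightarrow> (\<And>n. s n \<le> y) \<Longrightarrow> x \<le> y"
  unfolding is_sup_seq_def by blast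

lemma eventually_le_if_cc_sup:
  fixes s :: "nat \<Rightarrow> 'a::order"
  assumes "incseq s" "is_sup_seq s x" "cc a x"
  shows "eventually (\<lambda>n. a \<le> s n) sequentially"
proof -
  obtain n where "a \<le> s n" using assms unfolding cc_def by blast
  then show ?thesis
    using \<open>incseq s\<close> by (auto simp: eventually_sequentially incseq_def intro: order_trans)
qed

lemma rapid_seq_incseq: "(\<And>n. cc (s n) (s (Suc n))) \<Longrightarrow> incseq (s::nat \<Rightarrow> 'a::order)"
  by (simp add: incseq_SucI cc_le)

lemma rapid_seq_cc_sup:
  "(\<And>n. cc (s n) (s (Suc n))) \<Longrightarrow> is_sup_seq s x \<Longrightarrow> cc (s n) (x::'a::order)"
  using cc_mono_right is_sup_seq_upper by blast

lemma directed_countable_dominated_by_chain: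
  fixes D S :: "'a::order set"
  assumes directed: "\<And>x y. x \<in> D \<Longrightarrow> y \<in> D \<Longrightarrow> \<exists>z\<in>D. x \<le> z \<and> y \<le> z"
    and "D \<noteq> {}" "S \<subseteq> D" "countable S"
  shows "\<exists>c. incseq c \<and> range c \<subseteq> D \<and> (\<forall>s\<in>S. \<exists>n. s \<le> c n)"
proof -
  obtain d where "d \<in> D" using \<open>D \<noteq> {}\<close> by blast
  define S' where "S' = insert d S"
  have "countable S'" "S' \<noteq> {}" "S' \<subseteq> D"
    using assms \<open>d \<in> D\<close> unfolding S'_def by auto
  define \<beta> where "\<beta> = from_nat_into S'"
  have \<beta>D: "\<beta> n \<in> D" for n
    using from_nat_into[OF \<open>S' \<noteq> {}\<close>] \<open>S' \<subseteq> D\<close> unfolding \<beta>_def by blast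
  define extend where "extend n z = (SOME w. w \<in> D \<and> z \<le> w \<and> \<beta> (Suc n) \<le> w)" for n z
  define c where "c = rec_nat (\<beta> 0) extend"
  have extend_in_D: "extend n z \<in> D \<and> z \<le> extend n z \<and> \<beta> (Suc n) \<le> extend n z"
    if "z \<in> D" for z n
  proof -
    have "\<exists>w. w \<in> D \<and> z \<le> w \<and> \<beta> (Suc n) \<le> w" using directed[OF that \<beta>D] by blast
    then show ?thesis unfolding extend_def by (rule someI_ex)
  qed
  have c_simps: "c 0 = \<beta> 0" "c (Suc n) = extend n (c n)" for n
    by (simp_all add: c_def)
  have "c n \<in> D" for n
    by (induction n) (use \<beta>D extend_in_D in \<open>simp_all add: c_simps\<close>)
  then have step: "c n \<in> D \<and> c n \<le> c (Suc n) \<and> \<beta> (Suc n) \<le> c (Suc n)" for n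
    using extend_in_D by (simp add: c_simps)
  have "\<beta> n \<le> c n" for n
    using step[of "n - 1"] by (cases n) (simp_all add: c_simps)
  moreover have "\<exists>n. \<beta> n = s" if "s \<in> S" for s
    using from_nat_into_surj[OF \<open>countable S'\<close>] that unfolding \<beta>_def S'_def by blast
  ultimately show ?thesis
    using step by (metis image_subsetI incseq_SucI)
qed

locale cu_order =
  assumes sup_exists: "incseq s \<Longrightarrow> \<exists>x. is_sup_seq s (x::'a::order)"
    and rapid_approx: "\<exists>s. (\<forall>n. cc (s n) (s (Suc n))) \<and> is_sup_seq s (a::'a)"
begin

lemma ex_cc_below: "\<exists>d. cc d (a::'a)"
  using rapid_approx rapid_seq_cc_sup by blast

lemma cc_interpolate:
  assumes "cc a (x::'a)"
  shows "\<exists>y. cc a y \<and> cc y x"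
proof -
  obtain s where s: "\<And>n. cc (s n) (s (Suc n))" "is_sup_seq s x" using rapid_approx by blast
  obtain n where "a \<le> s n"
    using eventually_le_if_cc_sup[OF rapid_seq_incseq[of s, OF s(1)] s(2) assms]
    by (auto simp: eventually_sequentially)
  then show ?thesis using s cc_mono_left rapid_seq_cc_sup by blast
qed

lemma cc_directed:
  fixes u v g1 g2 :: 'a
  assumes "interpolation_semigroup TYPE('a)"
    and "cc u g1" "cc v g1" "cc u g2" "cc v g2"
  shows "\<exists>c. u \<le> c \<and> v \<le> c \<and> cc c g1 \<and> cc c g2"
proof -
  obtain s where s: "\<And>n. cc (s n) (s (Suc n))" "is_sup_seq s g1" using rapid_approx by blast
  obtain p where p: "\<And>n. cc (p n) (p (Suc n))" "is_sup_seq p g2" using rapid_approx by blast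
  note s_ev = eventually_le_if_cc_sup[OF rapid_seq_incseq[of s, OF s(1)] s(2)]
  note p_ev = eventually_le_if_cc_sup[OF rapid_seq_incseq[of p, OF p(1)] p(2)]
  have "eventually (\<lambda>n. u \<le> s n \<and> v \<le> s n \<and> u \<le> p n \<and> v \<le> p n) sequentially"
    using s_ev[OF assms(2)] s_ev[OF assms(3)] p_ev[OF assms(4)] p_ev[OF assms(5)]
    by (simp add: eventually_conj_iff)
  then obtain N where "u \<le> s N" "v \<le> s N" "u \<le> p N" "v \<le> p N"
    by (auto simp: eventually_sequentially)
  then obtain c where c: "u \<le> c" "v \<le> c" "c \<le> s N" "c \<le> p N"
    using assms(1) unfolding interpolation_semigroup_def by blast
  then show ?thesis
    using rapid_seq_cc_sup[OF s] rapid_seq_cc_sup[OF p] cc_mono_left by blast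
qed

end

locale countably_based_cu_interpolation = cu_order +
  fixes B :: "'a::order set"
  assumes countable_basis: "countable B"
    and basis: "cc a' a \<Longrightarrow> \<exists>b\<in>B. a' \<le> b \<and> cc b a"
    and interpolation: "interpolation_semigroup TYPE('a)"
begin

lemma le_if_basis_below:
  assumes "\<And>b. b \<in> B \<Longrightarrow> cc b F \<Longrightarrow> b \<le> H"
  shows "F \<le> (H::'a)"
proof -
  obtain r where r: "\<And>n. cc (r n) (r (Suc n))" "is_sup_seq r F" using rapid_approx by blast
  have "r n \<le> H" for n
  proof -
    obtain b where "b \<in> B" "r n \<le> b" "cc b (r (Suc n))" using basis r(1) by blast
    then show ?thesis
      using assms cc_mono_right is_sup_seq_upper[OF r(2)] order_trans by metis
  qed
  then show ?thesis using is_sup_seq_least[OF r(2)] by blast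
qed

definition basis_meet :: "'a \<Rightarrow> 'a \<Rightarrow> 'a \<Rightarrow> bool" where
  "basis_meet G1 G2 x \<longleftrightarrow> (\<forall>b\<in>B. cc b G1 \<and> cc b G2 \<longrightarrow> b \<le> x) \<and>
     (\<forall>a. cc a x \<longleftrightarrow> (\<exists>e. cc a e \<and> cc e G1 \<and> cc e G2))"

lemma basis_meet_le:
  assumes "basis_meet G1 G2 x"
  shows "x \<le> G1" "x \<le> G2"
  using assms unfolding basis_meet_def
  by (metis cc_le le_if_basis_below order_trans)+

lemma basis_meet_ge:
  assumes "basis_meet G1 G2 x" "F \<le> G1" "F \<le> G2"
  shows "F \<le> x"
  using assms unfolding basis_meet_def by (meson cc_mono_right le_if_basis_below)

lemma basis_meet_exists:
  assumes "F \<le> G1" "F \<le> G2"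
  shows "\<exists>x. basis_meet G1 G2 x"
proof -
  define D where "D = {c. cc c G1 \<and> cc c G2}"
  have "D \<noteq> {}"
    using ex_cc_below[of F] assms cc_mono_right unfolding D_def by blast
  moreover have "countable (B \<inter> D)" using countable_basis by simp
  ultimately obtain c where c: "incseq c" "range c \<subseteq> D" "\<forall>s\<in>B \<inter> D. \<exists>n. s \<le> c n"
    using directed_countable_dominated_by_chain[of D "B \<inter> D"]
      cc_directed[OF interpolation] unfolding D_def by blast
  obtain x where x: "is_sup_seq c x" using sup_exists[OF c(1)] by blast
  have below_x: "b \<le> x" if "b \<in> B" "cc b G1" "cc b G2" for b
    using c(3) that is_sup_seq_upper[OF x] order_trans unfolding D_def by blast
  have "cc a x \<longleftrightarrow> (\<exists>e. cc a e \<and> cc e G1 \<and> cc e G2)" for a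
  proof
    assume "cc a x"
    then obtain y where "cc a y" "cc y x" using cc_interpolate by blast
    moreover obtain n where "y \<le> c n"
      using eventually_le_if_cc_sup[OF c(1) x \<open>cc y x\<close>] by (auto simp: eventually_sequentially)
    ultimately have "cc a (c n)" using cc_mono_right by blast
    then show "\<exists>e. cc a e \<and> cc e G1 \<and> cc e G2" using c(2) unfolding D_def by blast
  next
    assume "\<exists>e. cc a e \<and> cc e G1 \<and> cc e G2"
    then obtain e where e: "cc a e" "cc e G1" "cc e G2" by blast
    obtain z where z: "cc a z" "cc z e" using cc_interpolate[OF e(1)] by blast
    obtain b where b: "b \<in> B" "z \<le> b" "cc b e" using basis[OF z(2)] by blast
    have "b \<le> x" using below_x b e cc_le cc_mono_left by blast
    then show "cc a x" using z(1) b(2) cc_mono_right order_trans by blast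
  qed
  then show ?thesis using below_x unfolding basis_meet_def by blast
qed

lemma basis_meet_Lsc:
  fixes X :: "'b::metric_space set" and h g1 g2 :: "'b \<Rightarrow> 'a"
  assumes "g1 \<in> Lsc X" "g2 \<in> Lsc X" "\<And>t. t \<in> X \<Longrightarrow> basis_meet (g1 t) (g2 t) (h t)"
  shows "h \<in> Lsc X"
  unfolding Lsc_def
proof safe
  fix a
  have "{t\<in>X. cc a (h t)} = (\<Union>e\<in>{e. cc a e}. {t\<in>X. cc e (g1 t)} \<inter> {t\<in>X. cc e (g2 t)})"
    using assms(3) unfolding basis_meet_def by blast
  moreover have "openin (top_of_set X) ({t\<in>X. cc e (g1 t)} \<inter> {t\<in>X. cc e (g2 t)})" for e
    using assms(1,2) unfolding Lsc_def by blast
  ultimately show "openin (top_of_set X) {t\<in>X. cc a (h t)}" by auto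
qed

end

theorem proposition3p5:
  fixes X :: "'b::metric_space set"
  assumes "Cu_semigroup TYPE('a::{ab_semigroup_add, order})"
    and "countably_based TYPE('a)"
    and "interpolation_semigroup TYPE('a)"
    and "compact X"
    and "finite_dimensional X"
  shows "Lsc_interpolation X TYPE('a)"
proof -
  obtain B :: "'a set" where "countable B" "\<forall>a' a::'a. cc a' a \<longrightarrow> (\<exists>b\<in>B. a' \<le> b \<and> cc b a)"
    using assms(2) unfolding countably_based_def by blast
  then interpret countably_based_cu_interpolation B
    using assms(1,3) by unfold_locales (auto simp: Cu_semigroup_def)
  show ?thesis unfolding Lsc_interpolation_def
  proof (intro allI impI)
    fix f1 f2 g1 g2 :: "'b \<Rightarrow> 'a"
    assume fg: "f1 \<in> Lsc X \<and> f2 \<in> Lsc X \<and> g1 \<in> Lsc X \<and> g2 \<in> Lsc X \<and>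
      (\<forall>t\<in>X. f1 t \<le> g1 t \<and> f1 t \<le> g2 t \<and> f2 t \<le> g1 t \<and> f2 t \<le> g2 t)"
    define h where "h t = (SOME x. basis_meet (g1 t) (g2 t) x)" for t
    have h: "basis_meet (g1 t) (g2 t) (h t)" if "t \<in> X" for t
      unfolding h_def using basis_meet_exists fg that by (meson someI_ex)
    then have "h \<in> Lsc X" using basis_meet_Lsc fg by blast
    moreover have "\<forall>t\<in>X. f1 t \<le> h t \<and> f2 t \<le> h t \<and> h t \<le> g1 t \<and> h t \<le> g2 t"
      using h basis_meet_ge basis_meet_le fg by blast
    ultimately show "\<exists>h\<in>Lsc X. \<forall>t\<in>X. f1 t \<le> h t \<and> f2 t \<le> h t \<and> h t \<le> g1 t \<and> h t \<le> g2 t"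
      by blast
  qed
qed

end
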